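(* Fix a tomographically complete measurement $\mu^\diamond$ on $\mathcal X=\mathbb C^n$ with finite outcome set $\mathcal Y$. For every quantum property $\Gamma:\mathrm{Dens}(\mathcal X)\to\mathcal R$, $\mathrm{elic}_Q(\Gamma)=\mathrm{elic}_{\mathcal P^\diamond}(\Gamma^\diamond)$.
   Context: $\mathrm{Herm}(\mathcal X)$ Hermitian matrices with $\langle X,Y\rangle=\mathrm{Tr}(X^*Y)$; $\mathrm{Dens}(\mathcal X)$ density matrices. A measurement is a family $\{\mu_y\}_{y\in\mathcal Y}$ of positive semidefinite operators summing to $I$; tomographically complete if its real span is $\mathrm{Herm}(\mathcal X)$. $\phi:\mathrm{Herm}(\mathcal X)\to\mathbb R^{\mathcal Y}$, $(\phi X)_y=\langle\mu^\diamond_y,X\rangle$; $\phi^+$ its Moore–Penrose pseudoinverse; $\mathcal P^\diamond=\phi(\mathrm{Dens}(\mathcal X))$; $\Gamma^\diamond(p)=\Gamma(\phi^+p)$ for $p\in\mathcal P^\diamond$. Quantum elicitability: there is a quantum score $S=(s,\mu)$, $s:\mathcal R\times\mathbb N\to\mathbb R$, $\mu(r)$ a measurement, with $\{\Gamma(\rho)\}=\arg\max_r\sum_y\langle\mu(r)_y,\rho\rangle s(r,y)$ for all $\rho$. Classical elicitability on $\mathcal P$: there is $\hat s:\mathcal R\times\mathcal Y\to\mathbb R$ with $\{\Gamma(p)\}=\arg\max_r\sum_yp_y\hat s(r,y)$ for all $p\in\mathcal P$. Quantum identifiability of $\hat\Gamma:\mathrm{Dens}(\mathcal X)\to\mathbb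 R^k$: for each $r$ in the range there is $V(r)\in\mathrm{Herm}(\mathcal X)^k$ with $\hat\Gamma(\rho)=r\iff\langle V(r)_i,\rho\rangle=0\ \forall i$; classical identifiability on $\mathcal P$: for each $r$ there is $v(r)\in\mathbb R^{k\times\mathcal Y}$ with $\hat\Gamma(p)=r\iff v(r)p=0$. $\Gamma$ is $k$-elicitable if there exist an elicitable and identifiable $\hat\Gamma$ with values in $\mathbb R^k$ (on the same domain) and a map $\psi:\mathbb R^k\to\mathcal R$ with $\Gamma=\psi\circ\hat\Gamma$. $\mathrm{elic}_Q(\Gamma)$ (resp. $\mathrm{elic}_{\mathcal P}(\Gamma)$) is the least such $k$ in the quantum (resp. classical, domain $\mathcal P$) sense. *)

theory Defs
  imports "HOL-Analysis.Analysis" "HOL-Library.Extended_Nat"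
begin

text \<open>Operators on X = C^n are matrices complex^'n^'n, with 'n a finite index type.\<close>

definition adj :: "complex^'n^'n \<Rightarrow> complex^'n^'n" where
  "adj A = (\<chi> i j. cnj (A $ j $ i))"

definition hermitian :: "complex^'n^'n \<Rightarrow> bool" where
  "hermitian A \<longleftrightarrow> adj A = A"

text \<open>Hilbert-Schmidt inner product  Tr(X^* Y).\<close>
definition hs_inner :: "complex^'n^'n \<Rightarrow> complex^'n^'n \<Rightarrow> complex" where
  "hs_inner X Y = (\<Sum>i\<in>UNIV. \<Sum>j\<in>UNIV. cnj (X $ j $ i) * Y $ j $ i)"

definition mtrace :: "complex^'n^'n \<Rightarrow> complex" where
  "mtrace A = (\<Sum>i\<in>UNIV. A $ i $ i)"

definition psd :: "complex^'n^'n \<Rightarrow> bool" where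
  "psd A \<longleftrightarrow> hermitian A \<and>
     (\<forall>v::complex^'n. 0 \<le> Re (\<Sum>i\<in>UNIV. \<Sum>j\<in>UNIV. cnj (v $ i) * A $ i $ j * v $ j))"

definition Dens :: "(complex^'n^'n) set" where
  "Dens = {\<rho>. psd \<rho> \<and> mtrace \<rho> = 1}"

definition is_measurement :: "'y set \<Rightarrow> ('y \<Rightarrow> complex^'n^'n) \<Rightarrow> bool" where
  "is_measurement Y \<mu> \<longleftrightarrow> finite Y \<and> (\<forall>y\<in>Y. psd (\<mu> y)) \<and> (\<Sum>y\<in>Y. \<mu> y) = mat 1"

definition tomo_complete :: "('y::finite \<Rightarrow> complex^'n^'n) \<Rightarrow> bool" where
  "tomo_complete \<mu> \<longleftrightarrow>
     {H. hermitian H} = {(\<Sum>y\<in>UNIV. c y *\<^sub>R \<mu> y) | c :: 'y \<Rightarrow> real. True}"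

definition phi :: "('y::finite \<Rightarrow> complex^'n^'n) \<Rightarrow> complex^'n^'n \<Rightarrow> ('y \<Rightarrow> real)" where
  "phi \<mu> X = (\<lambda>y. Re (hs_inner (\<mu> y) X))"

text \<open>Moore-Penrose pseudoinverse of phi : Herm(X) -> R^Y (Hilbert-Schmidt inner product
  on Herm(X), standard Euclidean one on R^Y): the minimum-norm least-squares solution.\<close>
definition residual :: "('y::finite \<Rightarrow> complex^'n^'n) \<Rightarrow> ('y \<Rightarrow> real) \<Rightarrow> complex^'n^'n \<Rightarrow> real" where
  "residual \<mu> p X = (\<Sum>y\<in>UNIV. (phi \<mu> X y - p y)^2)"

definition pinv :: "('y::finite \<Rightarrow> complex^'n^'n) \<Rightarrow> ('y \<Rightarrow> real) \<Rightarrow> complex^'n^'n" where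
  "pinv \<mu> p = (THE X. hermitian X
      \<and> (\<forall>Z. hermitian Z \<longrightarrow> residual \<mu> p X \<le> residual \<mu> p Z)
      \<and> (\<forall>Z. hermitian Z \<and> (\<forall>W. hermitian W \<longrightarrow> residual \<mu> p Z \<le> residual \<mu> p W)
             \<longrightarrow> Re (hs_inner X X) \<le> Re (hs_inner Z Z)))"

definition Pdia :: "('y::finite \<Rightarrow> complex^'n^'n) \<Rightarrow> ('y \<Rightarrow> real) set" where
  "Pdia \<mu> = phi \<mu> ` Dens"

definition Gamma_dia :: "('y::finite \<Rightarrow> complex^'n^'n) \<Rightarrow> (complex^'n^'n \<Rightarrow> 'r) \<Rightarrow> ('y \<Rightarrow> real) \<Rightarrow> 'r" where
  "Gamma_dia \<mu> \<Gamma> p = \<Gamma> (pinv \<mu> p)"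

text \<open>Quantum scores: s : R x nat -> real, and for every report r a measurement mu r with
  finitely many (nonzero) outcomes in nat.\<close>
definition qscore :: "('a \<Rightarrow> nat \<Rightarrow> real) \<Rightarrow> ('a \<Rightarrow> nat \<Rightarrow> complex^'n^'n) \<Rightarrow> 'a \<Rightarrow> complex^'n^'n \<Rightarrow> real" where
  "qscore s \<mu> r \<rho> = (\<Sum>y\<in>{y. \<mu> r y \<noteq> 0}. Re (hs_inner (\<mu> r y) \<rho>) * s r y)"

definition q_elicitable :: "'a set \<Rightarrow> (complex^'n^'n \<Rightarrow> 'a) \<Rightarrow> bool" where
  "q_elicitable R \<Gamma> \<longleftrightarrow> (\<exists>(s :: 'a \<Rightarrow> nat \<Rightarrow> real) (\<mu> :: 'a \<Rightarrow> nat \<Rightarrow> complex^'n^'n).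
      (\<forall>r\<in>R. is_measurement {y. \<mu> r y \<noteq> 0} (\<mu> r)) \<and>
      (\<forall>\<rho>\<in>Dens. {\<Gamma> \<rho>} = {r\<in>R. \<forall>r'\<in>R. qscore s \<mu> r' \<rho> \<le> qscore s \<mu> r \<rho>}))"

definition c_elicitable :: "('y::finite \<Rightarrow> real) set \<Rightarrow> 'a set \<Rightarrow> (('y \<Rightarrow> real) \<Rightarrow> 'a) \<Rightarrow> bool" where
  "c_elicitable P R \<Gamma> \<longleftrightarrow> (\<exists>s :: 'a \<Rightarrow> 'y \<Rightarrow> real.
      \<forall>p\<in>P. {\<Gamma> p} = {r\<in>R. \<forall>r'\<in>R. (\<Sum>y\<in>UNIV. p y * s r' y) \<le> (\<Sum>y\<in>UNIV. p y * s r y)})"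

text \<open>R^k, represented as real sequences vanishing from index k on.\<close>
definition Rk :: "nat \<Rightarrow> (nat \<Rightarrow> real) set" where
  "Rk k = {x. \<forall>i\<ge>k. x i = 0}"

definition q_identifiable :: "nat \<Rightarrow> (complex^'n^'n \<Rightarrow> (nat \<Rightarrow> real)) \<Rightarrow> bool" where
  "q_identifiable k \<Gamma> \<longleftrightarrow> (\<forall>r\<in>\<Gamma> ` Dens. \<exists>V :: nat \<Rightarrow> complex^'n^'n.
      (\<forall>i<k. hermitian (V i)) \<and>
      (\<forall>\<rho>\<in>Dens. \<Gamma> \<rho> = r \<longleftrightarrow> (\<forall>i<k. hs_inner (V i) \<rho> = 0)))"

definition c_identifiable :: "('y::finite \<Rightarrow> real) set \<Rightarrow> nat \<Rightarrow> (('y \<Rightarrow> real) \<Rightarrow> (nat \<Rightarrow> real)) \<Rightarrow> bool" where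
  "c_identifiable P k \<Gamma> \<longleftrightarrow> (\<forall>r\<in>\<Gamma> ` P. \<exists>v :: nat \<Rightarrow> 'y \<Rightarrow> real.
      \<forall>p\<in>P. \<Gamma> p = r \<longleftrightarrow> (\<forall>i<k. (\<Sum>y\<in>UNIV. v i y * p y) = 0))"

definition q_k_elicitable :: "nat \<Rightarrow> (complex^'n^'n \<Rightarrow> 'r) \<Rightarrow> bool" where
  "q_k_elicitable k \<Gamma> \<longleftrightarrow> (\<exists>(\<Gamma>h :: complex^'n^'n \<Rightarrow> (nat \<Rightarrow> real)) (\<psi> :: (nat \<Rightarrow> real) \<Rightarrow> 'r).
      (\<forall>\<rho>\<in>Dens. \<Gamma>h \<rho> \<in> Rk k) \<and> q_elicitable (Rk k) \<Gamma>h \<and> q_identifiable k \<Gamma>h \<and>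
      (\<forall>\<rho>\<in>Dens. \<Gamma> \<rho> = \<psi> (\<Gamma>h \<rho>)))"

definition c_k_elicitable :: "('y::finite \<Rightarrow> real) set \<Rightarrow> nat \<Rightarrow> (('y \<Rightarrow> real) \<Rightarrow> 'r) \<Rightarrow> bool" where
  "c_k_elicitable P k \<Gamma> \<longleftrightarrow> (\<exists>(\<Gamma>h :: ('y \<Rightarrow> real) \<Rightarrow> (nat \<Rightarrow> real)) (\<psi> :: (nat \<Rightarrow> real) \<Rightarrow> 'r).
      (\<forall>p\<in>P. \<Gamma>h p \<in> Rk k) \<and> c_elicitable P (Rk k) \<Gamma>h \<and> c_identifiable P k \<Gamma>h \<and>
      (\<forall>p\<in>P. \<Gamma> p = \<psi> (\<Gamma>h p)))"

text \<open>Least such k; infinity if there is none.\<close>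
definition elic_Q :: "(complex^'n^'n \<Rightarrow> 'r) \<Rightarrow> enat" where
  "elic_Q \<Gamma> = Inf {enat k | k. q_k_elicitable k \<Gamma>}"

definition elic_C :: "('y::finite \<Rightarrow> real) set \<Rightarrow> (('y \<Rightarrow> real) \<Rightarrow> 'r) \<Rightarrow> enat" where
  "elic_C P \<Gamma> = Inf {enat k | k. c_k_elicitable P k \<Gamma>}"

end

theory Submission
  imports Defs
begin

text \<open>Tomographic completeness makes \<open>\<phi>\<close> injective on Hermitian operators, so \<open>\<phi>\<^sup>+ \<circ> \<phi>\<close> is the
  identity there and \<open>\<phi>\<close> is a bijection from density matrices onto \<open>\<P>\<^sup>\<diamond>\<close>. Moreover, every
  Hermitian operator is a real combination \<open>\<Sum>\<^sub>y c\<^sub>y \<mu>\<^sub>y\<close>, so the real-linear functionals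
  \<open>\<rho> \<mapsto> \<langle>V,\<rho>\<rangle>\<close> are exactly the functionals \<open>p \<mapsto> \<Sum>\<^sub>y c\<^sub>y p\<^sub>y\<close> of \<open>p = \<phi> \<rho>\<close>. Expected quantum scores
  and identification functions are such functionals, and conversely every classical score
  is realised by measuring with \<open>\<mu>\<close> itself. Hence a reduction \<open>\<Gamma> = \<psi> \<circ> \<Gamma>'\<close> witnessing
  quantum \<open>k\<close>-elicitability transports along \<open>\<phi>\<close> to a classical one and back, for every \<open>k\<close>.\<close>

lemma adj_add: "adj (A + B) = adj A + adj B"
  by (simp add: adj_def vec_eq_iff)

lemma adj_scaleR: "adj (c *\<^sub>R A) = c *\<^sub>R adj A"
proof -
  have "cnj (c *\<^sub>R z) = c *\<^sub>R cnj z" for z :: complex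
    by (simp add: complex_eq_iff)
  then show ?thesis by (simp add: adj_def vec_eq_iff)
qed

lemma hermitian_sum: "(\<And>x. x \<in> A \<Longrightarrow> hermitian (f x)) \<Longrightarrow> hermitian (sum f A)"
  by (induction A rule: infinite_finite_induct)
    (auto simp: hermitian_def adj_add adj_def vec_eq_iff)

lemma hermitian_scaleR: "hermitian A \<Longrightarrow> hermitian (c *\<^sub>R A)"
  by (simp add: hermitian_def adj_scaleR)

lemma hermitian_diff: "hermitian A \<Longrightarrow> hermitian B \<Longrightarrow> hermitian (A - B)"
  by (simp add: hermitian_def adj_def vec_eq_iff)

lemma hermitian_if_measurement: "is_measurement Y \<mu> \<Longrightarrow> y \<in> Y \<Longrightarrow> hermitian (\<mu> y)"
  by (simp add: is_measurement_def psd_def)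

lemma hermitian_if_Dens: "\<rho> \<in> Dens \<Longrightarrow> hermitian \<rho>"
  by (simp add: Dens_def psd_def)

lemma hs_inner_sum_left: "hs_inner (sum f A) X = (\<Sum>y\<in>A. hs_inner (f y) X)"
  by (induction A rule: infinite_finite_induct)
    (auto simp: hs_inner_def distrib_right sum.distrib)

lemma hs_inner_scaleR_left: "hs_inner (c *\<^sub>R A) X = of_real c * hs_inner A X"
proof -
  have "(c *\<^sub>R A) $ j $ i = of_real c * A $ j $ i" for i j
    by (metis scaleR_conv_of_real vector_scaleR_component)
  then show ?thesis by (simp add: hs_inner_def sum_distrib_left mult.assoc)
qed

lemma hs_inner_diff_right: "hs_inner A (X - Y) = hs_inner A X - hs_inner A Y"
  by (simp add: hs_inner_def right_diff_distrib sum_subtractf)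

lemma hermitian_entry: "hermitian A \<Longrightarrow> A $ j $ i = cnj (A $ i $ j)"
  unfolding hermitian_def by (metis adj_def vec_lambda_beta)

lemma hs_inner_hermitian_real:
  assumes "hermitian A" "hermitian B"
  shows "hs_inner A B = of_real (Re (hs_inner A B))"
proof -
  have "cnj (hs_inner A B) = (\<Sum>i\<in>UNIV. \<Sum>j\<in>UNIV. A $ j $ i * cnj (B $ j $ i))"
    by (simp add: hs_inner_def)
  also have "\<dots> = (\<Sum>i\<in>UNIV. \<Sum>j\<in>UNIV. cnj (A $ i $ j) * B $ i $ j)"
    by (subst hermitian_entry[OF assms(1)], subst hermitian_entry[OF assms(2)]) simp
  also have "\<dots> = hs_inner A B"
    unfolding hs_inner_def by (rule sum.swap)
  finally show ?thesis
    by (metis Reals_cnj_iff Re_complex_of_real Reals_cases)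
qed

lemma hs_inner_self_eq_0: "Re (hs_inner X X) = 0 \<Longrightarrow> X = 0"
proof -
  assume "Re (hs_inner X X) = 0"
  then have "(\<Sum>i\<in>UNIV. \<Sum>j\<in>UNIV. (Re (X $ j $ i))\<^sup>2 + (Im (X $ j $ i))\<^sup>2) = 0"
    by (simp add: hs_inner_def Re_sum power2_eq_square)
  then have "(Re (X $ j $ i))\<^sup>2 + (Im (X $ j $ i))\<^sup>2 = 0" for i j
    by (simp add: sum_nonneg_eq_0_iff sum_nonneg)
  then show "X = 0" by (simp add: vec_eq_iff complex_eq_iff)
qed

lemma qscore_eq_hs_inner:
  "qscore s \<mu> r \<rho> = Re (hs_inner (\<Sum>y\<in>{y. \<mu> r y \<noteq> 0}. s r y *\<^sub>R \<mu> r y) \<rho>)"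
  by (simp add: qscore_def hs_inner_sum_left hs_inner_scaleR_left Re_sum mult.commute)

lemma hs_inner_combination_eq_phi:
  assumes "is_measurement UNIV \<mu>" "hermitian \<rho>"
  shows "hs_inner (\<Sum>y\<in>UNIV. c y *\<^sub>R \<mu> y) \<rho> = of_real (\<Sum>y\<in>UNIV. c y * phi \<mu> \<rho> y)"
  using hs_inner_hermitian_real[OF hermitian_if_measurement[OF assms(1)] assms(2)]
  by (simp add: hs_inner_sum_left hs_inner_scaleR_left phi_def)

lemma tomo_complete_coefficients:
  assumes "tomo_complete \<mu>" "\<forall>x\<in>A. hermitian (V x)"
  shows "\<exists>c. \<forall>x\<in>A. V x = (\<Sum>y\<in>UNIV. c x y *\<^sub>R \<mu> y)"
  using assms unfolding tomo_complete_def by (subst bchoice_iff[symmetric]) blast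

lemma phi_inj_on_hermitian:
  assumes "is_measurement UNIV \<mu>" "tomo_complete \<mu>"
    and "hermitian X" "hermitian Y" "phi \<mu> X = phi \<mu> Y"
  shows "X = Y"
proof -
  obtain c where c: "X - Y = (\<Sum>y\<in>UNIV. c y *\<^sub>R \<mu> y)"
    using assms(2) hermitian_diff[OF assms(3,4)] unfolding tomo_complete_def by blast
  have "phi \<mu> (X - Y) = (\<lambda>_. 0)"
    using assms(5) by (simp add: phi_def hs_inner_diff_right fun_eq_iff)
  then have "Re (hs_inner (X - Y) (X - Y)) = 0"
    by (subst (1) c, subst hs_inner_combination_eq_phi[OF assms(1) hermitian_diff[OF assms(3,4)]]) simp
  then show ?thesis by (metis hs_inner_self_eq_0 right_minus_eq)
qed

lemma pinv_phi:
  assumes "is_measurement UNIV \<mu>" "tomo_complete \<mu>" "hermitian \<rho>"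
  shows "pinv \<mu> (phi \<mu> \<rho>) = \<rho>"
proof -
  have residual_0: "residual \<mu> (phi \<mu> \<rho>) \<rho> = 0"
    by (simp add: residual_def)
  have residual_nonneg: "0 \<le> residual \<mu> p X" for p X
    by (simp add: residual_def sum_nonneg)
  \<comment> \<open>\<open>\<rho>\<close> is the only Hermitian zero of the residual, so it is the unique minimiser.\<close>
  have unique: "Z = \<rho>" if "hermitian Z" "residual \<mu> (phi \<mu> \<rho>) Z \<le> 0" for Z
  proof -
    have "(\<Sum>y\<in>UNIV. (phi \<mu> Z y - phi \<mu> \<rho> y)\<^sup>2) = 0"
      using that(2) residual_nonneg[of "phi \<mu> \<rho>" Z] by (simp add: residual_def)
    then have "phi \<mu> Z y = phi \<mu> \<rho> y" for y
      by (simp add: sum_nonneg_eq_0_iff)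
    then show ?thesis
      using phi_inj_on_hermitian[OF assms(1,2) that(1) assms(3)] by (simp add: fun_eq_iff)
  qed
  show ?thesis
    unfolding pinv_def
    by (rule the_equality) (use assms(3) residual_0 residual_nonneg unique in \<open>metis order.refl\<close>)+
qed

lemma phi_in_Pdia: "\<rho> \<in> Dens \<Longrightarrow> phi \<mu> \<rho> \<in> Pdia \<mu>"
  by (simp add: Pdia_def)

lemma Gamma_dia_phi:
  assumes "is_measurement UNIV \<mu>" "tomo_complete \<mu>" "\<rho> \<in> Dens"
  shows "Gamma_dia \<mu> \<Gamma> (phi \<mu> \<rho>) = \<Gamma> \<rho>"
  unfolding Gamma_dia_def pinv_phi[OF assms(1,2) hermitian_if_Dens[OF assms(3)]] ..

lemma pinv_in_Dens:
  assumes "is_measurement UNIV \<mu>" "tomo_complete \<mu>" "p \<in> Pdia \<mu>"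
  shows "pinv \<mu> p \<in> Dens"
  using assms pinv_phi[OF assms(1,2) hermitian_if_Dens] unfolding Pdia_def by auto

lemma sum_nonzero_reindex_to_nat:
  fixes Q :: "nat \<Rightarrow> 'a::zero" and h :: "nat \<Rightarrow> 'b::comm_monoid_add"
  assumes "{n. Q n \<noteq> 0} \<subseteq> range (to_nat :: 'y::finite \<Rightarrow> nat)" "\<And>n. Q n = 0 \<Longrightarrow> h n = 0"
  shows "(\<Sum>n\<in>{n. Q n \<noteq> 0}. h n) = (\<Sum>y\<in>(UNIV::'y set). h (to_nat y))"
proof -
  have "(\<Sum>n\<in>{n. Q n \<noteq> 0}. h n) = (\<Sum>n\<in>range (to_nat :: 'y \<Rightarrow> nat). h n)"
    by (rule sum.mono_neutral_left) (use assms in auto)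
  also have "\<dots> = (\<Sum>y\<in>(UNIV::'y set). h (to_nat y))"
    by (simp add: sum.reindex)
  finally show ?thesis .
qed

lemma qscore_as_classical_score:
  assumes "is_measurement UNIV \<mu>" "tomo_complete \<mu>"
    and "\<forall>r\<in>R. is_measurement {y. \<mu>' r y \<noteq> 0} (\<mu>' r)"
  shows "\<exists>c. \<forall>r\<in>R. \<forall>\<rho>. hermitian \<rho> \<longrightarrow> qscore s \<mu>' r \<rho> = (\<Sum>y\<in>UNIV. phi \<mu> \<rho> y * c r y)"
proof -
  have "\<forall>r\<in>R. hermitian (\<Sum>y\<in>{y. \<mu>' r y \<noteq> 0}. s r y *\<^sub>R \<mu>' r y)"
  proof
    fix r assume "r \<in> R"
    with assms(3) have "is_measurement {y. \<mu>' r y \<noteq> 0} (\<mu>' r)"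
      by blast
    then show "hermitian (\<Sum>y\<in>{y. \<mu>' r y \<noteq> 0}. s r y *\<^sub>R \<mu>' r y)"
      by (intro hermitian_sum hermitian_scaleR) (erule hermitian_if_measurement)
  qed
  from tomo_complete_coefficients[OF assms(2) this]
  obtain c where c: "\<forall>r\<in>R. (\<Sum>y\<in>{y. \<mu>' r y \<noteq> 0}. s r y *\<^sub>R \<mu>' r y) = (\<Sum>y\<in>UNIV. c r y *\<^sub>R \<mu> y)"
    by blast
  have "qscore s \<mu>' r \<rho> = (\<Sum>y\<in>UNIV. phi \<mu> \<rho> y * c r y)" if "r \<in> R" "hermitian \<rho>" for r \<rho>
    unfolding qscore_eq_hs_inner bspec[OF c that(1)] hs_inner_combination_eq_phi[OF assms(1) that(2)]
    by (simp add: mult.commute)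
  then show ?thesis by blast
qed

text \<open>Measuring with \<open>\<mu>\<close> itself, with outcomes relabelled into \<open>\<nat>\<close> by \<open>to_nat\<close>.\<close>
lemma classical_score_as_qscore:
  assumes "is_measurement UNIV \<mu>"
  shows "\<exists>(s' :: 'a \<Rightarrow> nat \<Rightarrow> real) \<mu>'. (\<forall>r. is_measurement {n. \<mu>' r n \<noteq> 0} (\<mu>' r)) \<and>
           (\<forall>r \<rho>. qscore s' \<mu>' r \<rho> = (\<Sum>y\<in>UNIV. phi \<mu> \<rho> y * s r (y :: 'y::finite)))"
proof (intro exI conjI allI)
  define \<mu>' where "\<mu>' (r :: 'a) n = (if n \<in> range (to_nat :: 'y \<Rightarrow> nat) then \<mu> (from_nat n) else 0)"
    for r n
  have supp: "{n. \<mu>' r n \<noteq> 0} \<subseteq> range (to_nat :: 'y \<Rightarrow> nat)" for r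
    by (auto simp: \<mu>'_def split: if_splits)
  have \<mu>'_to_nat: "\<mu>' r (to_nat y) = \<mu> y" for r y
    by (simp add: \<mu>'_def)
  show "is_measurement {n. \<mu>' r n \<noteq> 0} (\<mu>' r)" for r
    using assms finite_subset[OF supp] supp[of r]
    by (auto simp: is_measurement_def sum_nonzero_reindex_to_nat[OF supp] \<mu>'_to_nat)
  show "qscore (\<lambda>r n. s r (from_nat n)) \<mu>' r \<rho> = (\<Sum>y\<in>UNIV. phi \<mu> \<rho> y * s r y)" for r \<rho>
    unfolding qscore_def
    by (subst sum_nonzero_reindex_to_nat[OF supp])
      (auto simp: hs_inner_def \<mu>'_to_nat phi_def mult.commute)
qed

lemma c_elicitable_if_q_elicitable:
  fixes \<mu> :: "'y::finite \<Rightarrow> complex^'n^'n"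
  assumes "is_measurement UNIV \<mu>" "tomo_complete \<mu>"
    and compat: "\<forall>\<rho>\<in>Dens. G (phi \<mu> \<rho>) = \<Gamma> \<rho>"
    and "q_elicitable R \<Gamma>"
  shows "c_elicitable (Pdia \<mu>) R G"
proof -
  obtain s \<mu>' where meas': "\<forall>r\<in>R. is_measurement {y. \<mu>' r y \<noteq> 0} (\<mu>' r)"
    and elic: "\<forall>\<rho>\<in>Dens. {\<Gamma> \<rho>} = {r\<in>R. \<forall>r'\<in>R. qscore s \<mu>' r' \<rho> \<le> qscore s \<mu>' r \<rho>}"
    using assms(4) unfolding q_elicitable_def by blast
  obtain c where c: "\<And>r \<rho>. r \<in> R \<Longrightarrow> hermitian \<rho> \<Longrightarrow>
      qscore s \<mu>' r \<rho> = (\<Sum>y\<in>UNIV. phi \<mu> \<rho> y * c r y)"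
    using qscore_as_classical_score[OF assms(1,2) meas'] by blast
  have "{r\<in>R. \<forall>r'\<in>R. qscore s \<mu>' r' \<rho> \<le> qscore s \<mu>' r \<rho>} = {r\<in>R. \<forall>r'\<in>R.
      (\<Sum>y\<in>UNIV. phi \<mu> \<rho> y * c r' y) \<le> (\<Sum>y\<in>UNIV. phi \<mu> \<rho> y * c r y)}"
    if "\<rho> \<in> Dens" for \<rho>
    using that by (auto simp: c hermitian_if_Dens)
  with elic compat have "\<forall>\<rho>\<in>Dens. {G (phi \<mu> \<rho>)} = {r\<in>R. \<forall>r'\<in>R.
      (\<Sum>y\<in>UNIV. phi \<mu> \<rho> y * c r' y) \<le> (\<Sum>y\<in>UNIV. phi \<mu> \<rho> y * c r y)}"
    by simp
  then show ?thesis
    unfolding c_elicitable_def Pdia_def by blast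
qed

lemma q_elicitable_if_c_elicitable:
  fixes \<mu> :: "'y::finite \<Rightarrow> complex^'n^'n"
  assumes "is_measurement UNIV \<mu>"
    and compat: "\<forall>\<rho>\<in>Dens. G (phi \<mu> \<rho>) = \<Gamma> \<rho>"
    and "c_elicitable (Pdia \<mu>) R G"
  shows "q_elicitable R \<Gamma>"
proof -
  obtain s where elic: "\<forall>p\<in>Pdia \<mu>. {G p} =
      {r\<in>R. \<forall>r'\<in>R. (\<Sum>y\<in>UNIV. p y * s r' y) \<le> (\<Sum>y\<in>UNIV. p y * s r y)}"
    using assms(3) unfolding c_elicitable_def by blast
  obtain s' :: "_ \<Rightarrow> nat \<Rightarrow> real" and \<mu>'
    where meas': "\<forall>r. is_measurement {n. \<mu>' r n \<noteq> 0} (\<mu>' r)"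
      and score: "\<And>r \<rho>. qscore s' \<mu>' r \<rho> = (\<Sum>y\<in>UNIV. phi \<mu> \<rho> y * s r y)"
    using classical_score_as_qscore[OF assms(1)] by blast
  show ?thesis
    unfolding q_elicitable_def
  proof (intro exI[of _ s'] exI[of _ \<mu>'] conjI ballI)
    show "is_measurement {y. \<mu>' r y \<noteq> 0} (\<mu>' r)" for r
      using meas' by simp
    fix \<rho> :: "complex^'n^'n" assume \<rho>: "\<rho> \<in> Dens"
    show "{\<Gamma> \<rho>} = {r\<in>R. \<forall>r'\<in>R. qscore s' \<mu>' r' \<rho> \<le> qscore s' \<mu>' r \<rho>}"
      using bspec[OF elic phi_in_Pdia[OF \<rho>]] bspec[OF compat \<rho>] by (simp add: score)
  qed
qed

lemma image_Pdia_eq: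
  assumes "\<forall>\<rho>\<in>Dens. G (phi \<mu> \<rho>) = \<Gamma> \<rho>"
  shows "G ` Pdia \<mu> = \<Gamma> ` Dens"
  unfolding Pdia_def image_image by (rule image_cong) (use assms in auto)

lemma hs_inner_combination_eq_0_iff:
  assumes "is_measurement UNIV \<mu>" "hermitian \<rho>"
  shows "hs_inner (\<Sum>y\<in>UNIV. v y *\<^sub>R \<mu> y) \<rho> = 0 \<longleftrightarrow> (\<Sum>y\<in>UNIV. v y * phi \<mu> \<rho> y) = 0"
  using hs_inner_combination_eq_phi[OF assms] by (simp only: of_real_eq_0_iff)

lemma c_identifiable_if_q_identifiable:
  fixes \<mu> :: "'y::finite \<Rightarrow> complex^'n^'n"
  assumes "is_measurement UNIV \<mu>" "tomo_complete \<mu>"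
    and compat: "\<forall>\<rho>\<in>Dens. G (phi \<mu> \<rho>) = \<Gamma> \<rho>"
    and "q_identifiable k \<Gamma>"
  shows "c_identifiable (Pdia \<mu>) k G"
  unfolding c_identifiable_def image_Pdia_eq[OF compat]
proof
  fix r assume "r \<in> \<Gamma> ` Dens"
  then obtain V where herm_V: "\<forall>i<k. hermitian (V i)"
    and V: "\<forall>\<rho>\<in>Dens. \<Gamma> \<rho> = r \<longleftrightarrow> (\<forall>i<k. hs_inner (V i) \<rho> = 0)"
    using assms(4) unfolding q_identifiable_def by blast
  from herm_V have "\<forall>i\<in>{..<k}. hermitian (V i)"
    by simp
  from tomo_complete_coefficients[OF assms(2) this]
  obtain v where v: "\<forall>i\<in>{..<k}. V i = (\<Sum>y\<in>UNIV. v i y *\<^sub>R \<mu> y)"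
    by blast
  show "\<exists>v. \<forall>p\<in>Pdia \<mu>. G p = r \<longleftrightarrow> (\<forall>i<k. (\<Sum>y\<in>UNIV. v i y * p y) = 0)"
  proof (intro exI[of _ v] ballI)
    fix p assume "p \<in> Pdia \<mu>"
    then obtain \<rho> where \<rho>: "\<rho> \<in> Dens" "p = phi \<mu> \<rho>"
      by (auto simp: Pdia_def)
    have "G p = r \<longleftrightarrow> (\<forall>i<k. hs_inner (V i) \<rho> = 0)"
      using bspec[OF compat \<rho>(1)] bspec[OF V \<rho>(1)] \<rho>(2) by simp
    also have "\<dots> \<longleftrightarrow> (\<forall>i<k. (\<Sum>y\<in>UNIV. v i y * p y) = 0)"
      using v hs_inner_combination_eq_0_iff[OF assms(1) hermitian_if_Dens[OF \<rho>(1)]] \<rho>(2)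
      by simp
    finally show "G p = r \<longleftrightarrow> (\<forall>i<k. (\<Sum>y\<in>UNIV. v i y * p y) = 0)" .
  qed
qed

lemma q_identifiable_if_c_identifiable:
  fixes \<mu> :: "'y::finite \<Rightarrow> complex^'n^'n"
  assumes "is_measurement UNIV \<mu>"
    and compat: "\<forall>\<rho>\<in>Dens. G (phi \<mu> \<rho>) = \<Gamma> \<rho>"
    and "c_identifiable (Pdia \<mu>) k G"
  shows "q_identifiable k \<Gamma>"
  unfolding q_identifiable_def image_Pdia_eq[OF compat, symmetric]
proof
  fix r assume "r \<in> G ` Pdia \<mu>"
  then obtain v where v: "\<forall>p\<in>Pdia \<mu>. G p = r \<longleftrightarrow> (\<forall>i<k. (\<Sum>y\<in>UNIV. v i y * p y) = 0)"
    using assms(3) unfolding c_identifiable_def by blast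
  show "\<exists>V. (\<forall>i<k. hermitian (V i)) \<and> (\<forall>\<rho>\<in>Dens. \<Gamma> \<rho> = r \<longleftrightarrow> (\<forall>i<k. hs_inner (V i) \<rho> = 0))"
  proof (intro exI[of _ "\<lambda>i. \<Sum>y\<in>UNIV. v i y *\<^sub>R \<mu> y"] conjI allI impI ballI)
    show "hermitian (\<Sum>y\<in>UNIV. v i y *\<^sub>R \<mu> y)" for i
      by (intro hermitian_sum hermitian_scaleR hermitian_if_measurement[OF assms(1)])
    fix \<rho> :: "complex^'n^'n" assume \<rho>: "\<rho> \<in> Dens"
    have "\<Gamma> \<rho> = r \<longleftrightarrow> (\<forall>i<k. (\<Sum>y\<in>UNIV. v i y * phi \<mu> \<rho> y) = 0)"
      using bspec[OF v phi_in_Pdia[OF \<rho>]] bspec[OF compat \<rho>] by simp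
    then show "\<Gamma> \<rho> = r \<longleftrightarrow> (\<forall>i<k. hs_inner (\<Sum>y\<in>UNIV. v i y *\<^sub>R \<mu> y) \<rho> = 0)"
      by (simp add: hs_inner_combination_eq_0_iff[OF assms(1) hermitian_if_Dens[OF \<rho>]])
  qed
qed

lemma q_k_elicitable_iff_c_k_elicitable:
  fixes \<mu> :: "'y::finite \<Rightarrow> complex^'n^'n" and \<Gamma> :: "complex^'n^'n \<Rightarrow> 'r"
  assumes "is_measurement UNIV \<mu>" "tomo_complete \<mu>"
  shows "q_k_elicitable k \<Gamma> \<longleftrightarrow> c_k_elicitable (Pdia \<mu>) k (Gamma_dia \<mu> \<Gamma>)"
proof
  assume "q_k_elicitable k \<Gamma>"
  then obtain \<Gamma>' :: "_ \<Rightarrow> nat \<Rightarrow> real" and \<psi> where range: "\<forall>\<rho>\<in>Dens. \<Gamma>' \<rho> \<in> Rk k"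
    and elic: "q_elicitable (Rk k) \<Gamma>'" and ident: "q_identifiable k \<Gamma>'"
    and factor: "\<forall>\<rho>\<in>Dens. \<Gamma> \<rho> = \<psi> (\<Gamma>' \<rho>)"
    unfolding q_k_elicitable_def by blast
  have compat: "\<forall>\<rho>\<in>Dens. (\<Gamma>' \<circ> pinv \<mu>) (phi \<mu> \<rho>) = \<Gamma>' \<rho>"
    using pinv_phi[OF assms hermitian_if_Dens] by simp
  have "\<forall>p\<in>Pdia \<mu>. (\<Gamma>' \<circ> pinv \<mu>) p \<in> Rk k"
    by (intro ballI) (simp add: bspec[OF range] pinv_in_Dens[OF assms])
  moreover have "\<forall>p\<in>Pdia \<mu>. Gamma_dia \<mu> \<Gamma> p = \<psi> ((\<Gamma>' \<circ> pinv \<mu>) p)"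
    by (intro ballI) (simp add: bspec[OF factor] pinv_in_Dens[OF assms] Gamma_dia_def)
  moreover note c_elicitable_if_q_elicitable[OF assms compat elic]
    c_identifiable_if_q_identifiable[OF assms compat ident]
  ultimately show "c_k_elicitable (Pdia \<mu>) k (Gamma_dia \<mu> \<Gamma>)"
    unfolding c_k_elicitable_def by (intro exI[of _ "\<Gamma>' \<circ> pinv \<mu>"] exI[of _ \<psi>] conjI)
next
  assume "c_k_elicitable (Pdia \<mu>) k (Gamma_dia \<mu> \<Gamma>)"
  then obtain G :: "_ \<Rightarrow> nat \<Rightarrow> real" and \<psi> where range: "\<forall>p\<in>Pdia \<mu>. G p \<in> Rk k"
    and elic: "c_elicitable (Pdia \<mu>) (Rk k) G" and ident: "c_identifiable (Pdia \<mu>) k G"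
    and factor: "\<forall>p\<in>Pdia \<mu>. Gamma_dia \<mu> \<Gamma> p = \<psi> (G p)"
    unfolding c_k_elicitable_def by blast
  have compat: "\<forall>\<rho>\<in>Dens. G (phi \<mu> \<rho>) = (G \<circ> phi \<mu>) \<rho>"
    by simp
  have "\<forall>\<rho>\<in>Dens. (G \<circ> phi \<mu>) \<rho> \<in> Rk k"
    by (intro ballI) (simp add: bspec[OF range] phi_in_Pdia)
  moreover have "\<forall>\<rho>\<in>Dens. \<Gamma> \<rho> = \<psi> ((G \<circ> phi \<mu>) \<rho>)"
    by (intro ballI) (simp add: bspec[OF factor, symmetric] phi_in_Pdia Gamma_dia_phi[OF assms])
  moreover note q_elicitable_if_c_elicitable[OF assms(1) compat elic]
    q_identifiable_if_c_identifiable[OF assms(1) compat ident]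
  ultimately show "q_k_elicitable k \<Gamma>"
    unfolding q_k_elicitable_def by (intro exI[of _ "G \<circ> phi \<mu>"] exI[of _ \<psi>] conjI)
qed

theorem corollary6p3:
  fixes \<mu> :: "'y::finite \<Rightarrow> complex^'n^'n" and \<Gamma> :: "complex^'n^'n \<Rightarrow> 'r"
  assumes "is_measurement UNIV \<mu>" and "tomo_complete \<mu>"
  shows "elic_Q \<Gamma> = elic_C (Pdia \<mu>) (Gamma_dia \<mu> \<Gamma>)"
  unfolding elic_Q_def elic_C_def q_k_elicitable_iff_c_k_elicitable[OF assms] ..

end
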